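(* Let $\Gamma\subseteq\mathbb R^n$ be an open convex set, $S\subseteq\Gamma$ a nonempty convex set, and $f:\Gamma\to\mathbb R$ a continuously differentiable function that is pseudoconvex on $\Gamma$. Let $\bar S=\arg\min\{f(x)\mid x\in S\}$ and $\bar x\in\bar S$. Define \[ \begin{aligned} T_1&:=\{x\in S\mid \nabla f(x)^T(\bar x-x)=0\},\\ T_2&:=\{x\in S\mid \nabla f(x)^T(\bar x-x)\ge0\},\\ T_3&:=\{x\in S\mid \nabla f(x)^T(\bar x-x)=\nabla f(\bar x)^T(x-\bar x)\},\\ T_4&:=\{x\in S\mid \nabla f(x)^T(\bar x-x)\ge\nabla f(\bar x)^T(x-\bar x)\},\\ T_5&:=\{x\in S\mid \nabla f(x)^T(\bar x-x)=\nabla f(\bar x)^T(x-\bar x)=0\}. \end{aligned} \] Then $\bar S=T_1=T_2=T_3=T_4=T_5$.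
   Context: A differentiable function $f$ on an open set $\Gamma$ is pseudoconvex on $\Gamma$ iff for all $x,y\in\Gamma$, $f(y)<f(x)$ implies $\nabla f(x)^T(y-x)<0$. *)

theory Defs
  imports "HOL-Analysis.Analysis"
begin

text \<open>The gradient of f is given as a function g with
  (f has_derivative (\<lambda>h. g x \<bullet> h)) (at x) for x in \<Gamma>.\<close>
definition pseudoconvex_on :: "'a::euclidean_space set \<Rightarrow> ('a \<Rightarrow> real) \<Rightarrow> ('a \<Rightarrow> 'a) \<Rightarrow> bool" where
  "pseudoconvex_on \<Gamma> f g \<longleftrightarrow>
     (\<forall>x\<in>\<Gamma>. \<forall>y\<in>\<Gamma>. f y < f x \<longrightarrow> g x \<bullet> (y - x) < 0)"

definition argmin_on :: "('a \<Rightarrow> real) \<Rightarrow> 'a set \<Rightarrow> 'a set" where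
  "argmin_on f S = {x \<in> S. \<forall>y\<in>S. f x \<le> f y}"

end

theory Submission
  imports Defs
begin

text \<open>Write D(x, y) for the directional derivative g x \<bullet> (y - x). Every minimiser x satisfies
  the first-order condition D(x, y) \<ge> 0 for y in S, and for a pseudoconvex f a strictly positive
  D(x, y) forces f x < f y: otherwise f rises from x towards y, and at a point z just past x both
  x and y lie below f z, so pseudoconvexity makes both D(z, x) and D(z, y) negative, although
  x - z and y - z point in opposite directions. For two minimisers x and xbar, which have equal
  values, this yields D(x, xbar) = D(xbar, x) = 0. Conversely D(x, xbar) \<ge> 0 rules out
  f xbar < f x by the definition of pseudoconvexity. The remaining inclusions between the five
  sets follow from D(xbar, x) \<ge> 0 on S.\<close>

lemma has_real_derivative_along_line:
  fixes f :: "'a::euclidean_space \<Rightarrow> real"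
  assumes "(f has_derivative (\<lambda>h. g \<bullet> h)) (at x)"
  shows "((\<lambda>t. f (x + t *\<^sub>R d)) has_real_derivative (g \<bullet> d)) (at 0)"
proof -
  have line: "((\<lambda>t::real. x + t *\<^sub>R d) has_derivative (\<lambda>t. t *\<^sub>R d)) (at 0)"
    by (auto intro!: derivative_eq_intros)
  have "(f has_derivative (\<lambda>h. g \<bullet> h)) (at (x + 0 *\<^sub>R d))"
    using assms by simp
  from has_derivative_compose[OF line this]
  have "((\<lambda>t. f (x + t *\<^sub>R d)) has_derivative (\<lambda>t. g \<bullet> (t *\<^sub>R d))) (at 0)"
    by (simp add: o_def)
  moreover have "(\<lambda>t. g \<bullet> (t *\<^sub>R d)) = (*) (g \<bullet> d)"
    by (auto simp: mult.commute)
  ultimately show ?thesis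
    by (simp add: has_field_derivative_def)
qed

lemma argmin_on_imp_gradient_nonneg:
  fixes f :: "'a::euclidean_space \<Rightarrow> real"
  assumes "convex S" and "x \<in> argmin_on f S" and "y \<in> S"
    and "(f has_derivative (\<lambda>h. g \<bullet> h)) (at x)"
  shows "g \<bullet> (y - x) \<ge> 0"
proof (rule ccontr)
  assume "\<not> ?thesis"
  hence neg: "g \<bullet> (y - x) < 0" by simp
  have xS: "x \<in> S" and min: "\<And>z. z \<in> S \<Longrightarrow> f x \<le> f z"
    using assms(2) by (auto simp: argmin_on_def)
  obtain d where "d > 0"
    and dec: "\<And>h. h > 0 \<Longrightarrow> h < d \<Longrightarrow> f (x + (0 + h) *\<^sub>R (y - x)) < f (x + 0 *\<^sub>R (y - x))"
    using DERIV_neg_dec_right[OF has_real_derivative_along_line[OF assms(4)] neg] by blast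
  define h where "h = min (d / 2) 1"
  have h: "0 < h" "h < d" "h \<le> 1"
    using \<open>d > 0\<close> by (auto simp: h_def)
  have "x + h *\<^sub>R (y - x) = (1 - h) *\<^sub>R x + h *\<^sub>R y"
    by (simp add: algebra_simps)
  hence "x + h *\<^sub>R (y - x) \<in> S"
    using convexD_alt[OF assms(1) xS assms(3)] h by simp
  with min dec[OF h(1,2)] show False
    by fastforce
qed

lemma pseudoconvex_on_imp_le:
  assumes "pseudoconvex_on \<Gamma> f g" and "x \<in> \<Gamma>" and "y \<in> \<Gamma>" and "g x \<bullet> (y - x) \<ge> 0"
  shows "f x \<le> f y"
  using assms by (force simp: pseudoconvex_on_def)

lemma pseudoconvex_on_gradient_pos_imp_less:
  fixes f :: "'a::euclidean_space \<Rightarrow> real"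
  assumes pc: "pseudoconvex_on \<Gamma> f g" and "convex \<Gamma>" and x: "x \<in> \<Gamma>" and y: "y \<in> \<Gamma>"
    and "(f has_derivative (\<lambda>h. g x \<bullet> h)) (at x)" and pos: "g x \<bullet> (y - x) > 0"
  shows "f x < f y"
proof -
  have "f x \<le> f y"
    using pseudoconvex_on_imp_le[OF pc x y] pos by simp
  moreover have "f x \<noteq> f y"
  proof
    assume fxy: "f x = f y"
    obtain d where "d > 0"
      and inc: "\<And>h. h > 0 \<Longrightarrow> h < d \<Longrightarrow> f (x + 0 *\<^sub>R (y - x)) < f (x + (0 + h) *\<^sub>R (y - x))"
      using DERIV_pos_inc_right[OF has_real_derivative_along_line[OF assms(5)] pos] by blast
    define h where "h = min (d / 2) (1 / 2)"
    have h: "0 < h" "h < d" "h < 1"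
      using \<open>d > 0\<close> by (auto simp: h_def)
    define z where "z = x + h *\<^sub>R (y - x)"
    have "z = (1 - h) *\<^sub>R x + h *\<^sub>R y"
      by (simp add: z_def algebra_simps)
    hence z: "z \<in> \<Gamma>"
      using convexD_alt[OF assms(2) x y] h by simp
    have fz: "f x < f z"
      using inc[OF h(1,2)] by (simp add: z_def)
    \<comment> \<open>Pseudoconvexity at z points both towards x and towards y downhill, yet x - z and y - z
      are opposite multiples of y - x.\<close>
    have "g z \<bullet> (x - z) < 0" and "g z \<bullet> (y - z) < 0"
      using pc z x y fz fxy by (auto simp: pseudoconvex_on_def)
    moreover have "x - z = (- h) *\<^sub>R (y - x)" and "y - z = (1 - h) *\<^sub>R (y - x)"
      by (simp_all add: z_def algebra_simps)
    ultimately have "- h * (g z \<bullet> (y - x)) < 0" and "(1 - h) * (g z \<bullet> (y - x)) < 0"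
      by simp_all
    with h show False
      by (simp add: mult_less_0_iff zero_less_mult_iff)
  qed
  ultimately show ?thesis by simp
qed

lemma pseudoconvex_on_argmin_on_gradient_zero:
  fixes f :: "'a::euclidean_space \<Rightarrow> real"
  assumes pc: "pseudoconvex_on \<Gamma> f g" and "convex \<Gamma>" and "convex S" and "S \<subseteq> \<Gamma>"
    and grad: "\<And>x. x \<in> \<Gamma> \<Longrightarrow> (f has_derivative (\<lambda>h. g x \<bullet> h)) (at x)"
    and x: "x \<in> argmin_on f S" and y: "y \<in> argmin_on f S"
  shows "g x \<bullet> (y - x) = 0"
proof -
  have S: "x \<in> S" "y \<in> S" and "f x = f y"
    using x y by (auto simp: argmin_on_def intro: order_antisym)
  hence "\<not> g x \<bullet> (y - x) > 0"
    using pseudoconvex_on_gradient_pos_imp_less[OF pc assms(2)] grad assms(4) by fastforce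
  moreover have "g x \<bullet> (y - x) \<ge> 0"
    using argmin_on_imp_gradient_nonneg[OF assms(3) x S(2) grad] S assms(4) by blast
  ultimately show ?thesis by simp
qed

theorem corollary3:
  fixes \<Gamma> S :: "'a::euclidean_space set"
    and f :: "'a \<Rightarrow> real" and g :: "'a \<Rightarrow> 'a" and xbar :: 'a
  assumes "open \<Gamma>" and "convex \<Gamma>"
    and "S \<subseteq> \<Gamma>" and "S \<noteq> {}" and "convex S"
    and grad: "\<And>x. x \<in> \<Gamma> \<Longrightarrow> (f has_derivative (\<lambda>h. g x \<bullet> h)) (at x)"
    and "continuous_on \<Gamma> g"
    and "pseudoconvex_on \<Gamma> f g"
    and "xbar \<in> argmin_on f S"
  shows "argmin_on f S = {x \<in> S. g x \<bullet> (xbar - x) = 0}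
       \<and> argmin_on f S = {x \<in> S. g x \<bullet> (xbar - x) \<ge> 0}
       \<and> argmin_on f S = {x \<in> S. g x \<bullet> (xbar - x) = g xbar \<bullet> (x - xbar)}
       \<and> argmin_on f S = {x \<in> S. g x \<bullet> (xbar - x) \<ge> g xbar \<bullet> (x - xbar)}
       \<and> argmin_on f S = {x \<in> S. g x \<bullet> (xbar - x) = g xbar \<bullet> (x - xbar)
                                 \<and> g xbar \<bullet> (x - xbar) = 0}"
proof -
  have xbar: "xbar \<in> S" "\<And>y. y \<in> S \<Longrightarrow> f xbar \<le> f y"
    using assms(9) by (auto simp: argmin_on_def)
  have zero: "g x \<bullet> (xbar - x) = 0" "g xbar \<bullet> (x - xbar) = 0" if "x \<in> argmin_on f S" for x
    using pseudoconvex_on_argmin_on_gradient_zero[OF assms(8,2,5,3) grad] that assms(9) by blast+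
  have nonneg: "g xbar \<bullet> (x - xbar) \<ge> 0" if "x \<in> S" for x
    using argmin_on_imp_gradient_nonneg[OF assms(5,9) that grad] xbar(1) assms(3) by blast
  have minimiser: "x \<in> argmin_on f S" if "x \<in> S" and "g x \<bullet> (xbar - x) \<ge> 0" for x
  proof -
    have "f x \<le> f xbar"
      using pseudoconvex_on_imp_le[OF assms(8)] that xbar(1) assms(3) by blast
    with xbar(2) have "\<forall>y\<in>S. f x \<le> f y"
      by (meson order_trans)
    with that(1) show ?thesis
      by (simp add: argmin_on_def)
  qed
  let ?T2 = "{x \<in> S. g x \<bullet> (xbar - x) \<ge> 0}"
  let ?T4 = "{x \<in> S. g x \<bullet> (xbar - x) \<ge> g xbar \<bullet> (x - xbar)}"
  let ?T5 = "{x \<in> S. g x \<bullet> (xbar - x) = g xbar \<bullet> (x - xbar) \<and> g xbar \<bullet> (x - xbar) = 0}"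
  have M_T5: "argmin_on f S \<subseteq> ?T5"
    using zero by (auto simp: argmin_on_def)
  have T2_M: "?T2 \<subseteq> argmin_on f S"
    using minimiser by blast
  have T4_T2: "?T4 \<subseteq> ?T2"
    using nonneg by fastforce
  show ?thesis
    using M_T5 T2_M T4_T2 by (intro conjI equalityI subsetI; auto)
qed

end
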